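(* Let $V\subset\mathbb{R}^d$ be a finite antichain, $p\in S_V$, $v\in D_p$ with $v_i=p_i$, and assume $v$ is not an $i$-witness for $p$. Then there is a minimum $u\in D_p$ such that $T_p(u)\subsetneq T_p(v)$ and $i\in T_p(v)\setminus T_p(u)$.
   Context: For $x,y\in\mathbb{R}^d$, $x\le y$ (dominance order) means $x_i\le y_i$ for all $i$; $y\rhd x$ means $y_i>x_i$ for all $i$; $y\rhd_i x$ means $y_i=x_i$ and $y_j>x_j$ for all $j\neq i$. $V\subset\mathbb{R}^d$ is a finite antichain in the dominance order (elements are called minima). The orthogonal surface $S_V$ is the topological boundary of $\langle V\rangle=\{x: x\ge v\text{ for some }v\in V\}$; equivalently $p\in S_V$ iff there is $v\in V$ with $v\le p$ and no $w\in V$ with $p\rhd w$. For $p\in S_V$, $D_p=\{v\in V:v\le p\}$ and for $v\in D_p$, $T_p(v)=\{i: p_i=v_i\}$. For $p\in S_V$, a minimum $v\in D_p$ is an $i$-witness for $p$ if there is $q\in S_V$ with $v\le p\le q$ and $q\rhd_i v$. *)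

theory Defs
  imports "HOL-Analysis.Analysis"
begin

definition dom_le :: "real^'d \<Rightarrow> real^'d \<Rightarrow> bool" where
  "dom_le x y \<longleftrightarrow> (\<forall>i. x$i \<le> y$i)"

definition strictly_dom :: "real^'d \<Rightarrow> real^'d \<Rightarrow> bool" where
  "strictly_dom y x \<longleftrightarrow> (\<forall>i. y$i > x$i)"

definition strictly_dom_except :: "real^'d \<Rightarrow> 'd \<Rightarrow> real^'d \<Rightarrow> bool" where
  "strictly_dom_except y i x \<longleftrightarrow> y$i = x$i \<and> (\<forall>j. j \<noteq> i \<longrightarrow> y$j > x$j)"

definition antichain_dom :: "(real^'d) set \<Rightarrow> bool" where
  "antichain_dom V \<longleftrightarrow> (\<forall>v\<in>V. \<forall>w\<in>V. dom_le v w \<longrightarrow> v = w)"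

definition orth_surface :: "(real^'d) set \<Rightarrow> (real^'d) set" where
  "orth_surface V = {p. (\<exists>v\<in>V. dom_le v p) \<and> \<not>(\<exists>w\<in>V. strictly_dom p w)}"

definition Dset :: "(real^'d) set \<Rightarrow> real^'d \<Rightarrow> (real^'d) set" where
  "Dset V p = {v\<in>V. dom_le v p}"

definition Tset :: "real^'d \<Rightarrow> real^'d \<Rightarrow> 'd set" where
  "Tset p v = {i. p$i = v$i}"

definition is_witness :: "(real^'d) set \<Rightarrow> 'd \<Rightarrow> real^'d \<Rightarrow> real^'d \<Rightarrow> bool" where
  "is_witness V i p v \<longleftrightarrow> v \<in> Dset V p \<and>
     (\<exists>q\<in>orth_surface V. dom_le v p \<and> dom_le p q \<and> strictly_dom_except q i v)"

end

theory Submission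
  imports Defs
begin

(* Raise p by a small e > 0 in the coordinates of T_p(v) other than i, giving a point q
   with v <= p <= q and q >_i v. Since v is not an i-witness, q lies off the surface, and as
   v <= q, some minimum u is strictly dominated by q. If e is below every positive gap
   w_j - p_j (there are finitely many), then u <= p, and every tight coordinate of u is one
   where q was raised, i.e. lies in T_p(v) - {i}. *)

definition raise_tight :: "real^'d \<Rightarrow> real^'d \<Rightarrow> 'd \<Rightarrow> real \<Rightarrow> real^'d" where
  "raise_tight p v i e = (\<chi> j. if j \<noteq> i \<and> p$j = v$j then p$j + e else p$j)"

lemma finite_positive_gap:
  fixes V :: "(real^'d) set" and p :: "real^'d"
  assumes "finite V"
  obtains e :: real where "e > 0" and "\<And>w j. w \<in> V \<Longrightarrow> p$j < w$j \<Longrightarrow> p$j + e \<le> w$j"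
proof
  define gaps where "gaps = (\<lambda>(w, j). w$j - p$j) ` {(w, j). w \<in> V \<and> p$j < w$j}"
  have "finite gaps"
    unfolding gaps_def
    by (rule finite_imageI, rule finite_subset[of _ "V \<times> UNIV"]) (auto simp: assms)
  then show "Min (insert 1 gaps) > 0"
    by (auto simp: gaps_def)
  fix w j assume "w \<in> V" "p$j < w$j"
  then have "w$j - p$j \<in> gaps"
    unfolding gaps_def by force
  with \<open>finite gaps\<close> have "Min (insert 1 gaps) \<le> w$j - p$j"
    by (meson Min_le finite_insert insertI2)
  then show "p$j + Min (insert 1 gaps) \<le> w$j"
    by linarith
qed

lemma dom_le_raise_tight:
  assumes "e \<ge> 0"
  shows "dom_le p (raise_tight p v i e)"
  using assms by (simp add: dom_le_def raise_tight_def)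

lemma strictly_dom_except_raise_tight:
  assumes "dom_le v p" and "v$i = p$i" and "e > 0"
  shows "strictly_dom_except (raise_tight p v i e) i v"
  unfolding strictly_dom_except_def
proof (intro conjI allI impI)
  fix j assume "j \<noteq> i"
  have "v$j \<le> p$j"
    using assms(1) by (simp add: dom_le_def)
  with \<open>j \<noteq> i\<close> \<open>e > 0\<close> show "raise_tight p v i e $ j > v$j"
    by (auto simp: raise_tight_def)
qed (simp add: assms(2) raise_tight_def)

lemma dom_le_if_strictly_below_raise_tight:
  assumes "e > 0" and "strictly_dom (raise_tight p v i e) w"
    and "\<And>j. p$j < w$j \<Longrightarrow> p$j + e \<le> w$j"
  shows "dom_le w p"
  unfolding dom_le_def
proof
  fix j
  have "w$j < raise_tight p v i e $ j"
    using assms(2) by (simp add: strictly_dom_def)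
  with \<open>e > 0\<close> have "w$j < p$j + e"
    by (auto simp: raise_tight_def split: if_splits)
  with assms(3)[of j] show "w$j \<le> p$j"
    by linarith
qed

lemma Tset_strictly_below_raise_tight:
  assumes "strictly_dom (raise_tight p v i e) w"
  shows "Tset p w \<subseteq> Tset p v - {i}"
proof
  fix j assume "j \<in> Tset p w"
  moreover have "w$j < raise_tight p v i e $ j"
    using assms by (simp add: strictly_dom_def)
  ultimately show "j \<in> Tset p v - {i}"
    by (auto simp: Tset_def raise_tight_def split: if_splits)
qed

theorem lemma4p6:
  fixes V :: "(real^'d) set" and p v :: "real^'d" and i :: 'd
  assumes "finite V" and "antichain_dom V"
    and "p \<in> orth_surface V"
    and "v \<in> Dset V p" and "v$i = p$i"
    and "\<not> is_witness V i p v"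
  shows "\<exists>u\<in>Dset V p. Tset p u \<subset> Tset p v \<and> i \<in> Tset p v - Tset p u"
proof -
  obtain e where "e > 0" and gap: "\<And>w j. w \<in> V \<Longrightarrow> p$j < w$j \<Longrightarrow> p$j + e \<le> w$j"
    using finite_positive_gap[OF \<open>finite V\<close>] by blast
  define q where "q = raise_tight p v i e"
  have "v \<in> V" and "dom_le v p"
    using assms(4) by (auto simp: Dset_def)
  have "dom_le p q"
    unfolding q_def using \<open>e > 0\<close> by (simp add: dom_le_raise_tight)
  moreover have "strictly_dom_except q i v"
    unfolding q_def using \<open>dom_le v p\<close> assms(5) \<open>e > 0\<close> by (rule strictly_dom_except_raise_tight)
  ultimately have "q \<notin> orth_surface V"
    using assms(4,6) \<open>dom_le v p\<close> by (auto simp: is_witness_def)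
  moreover have "dom_le v q"
    using \<open>dom_le v p\<close> \<open>dom_le p q\<close> unfolding dom_le_def by (meson order_trans)
  ultimately obtain u where "u \<in> V" and below: "strictly_dom q u"
    using \<open>v \<in> V\<close> unfolding orth_surface_def by blast
  have "u \<in> Dset V p"
    using dom_le_if_strictly_below_raise_tight[OF \<open>e > 0\<close> below[unfolded q_def] gap]
      \<open>u \<in> V\<close> by (simp add: Dset_def)
  moreover have "Tset p u \<subseteq> Tset p v - {i}"
    using below unfolding q_def by (rule Tset_strictly_below_raise_tight)
  moreover have "i \<in> Tset p v"
    using assms(5) by (simp add: Tset_def)
  ultimately show ?thesis
    by blast
qed

end
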